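(* Let $m$ be even and let $\mathbb{A}\in T_{m,n}$ be a $Z$ tensor. If $\mathbb{A}$ is a $B$ tensor, then $\mathbb{A}$ is a $P$ tensor. If $\mathbb{A}$ is a $B_0$ tensor, then $\mathbb{A}$ is a $P_0$ tensor.
   Context: $T_{m,n}$ denotes the set of real $m$th order $n$-dimensional tensors $\mathbb{A}=(a_{i_1i_2\ldots i_m})$ with $i_j\in[n]=\{1,\ldots,n\}$. $\mathbb{A}$ is a $Z$ tensor if $a_{i_1\ldots i_m}\le0$ whenever $(i_1,\ldots,i_m)$ is not of the form $(i,\ldots,i)$. For $x\in\mathbb{R}^n$, $(\mathbb{A}x^{m-1})_i=\sum_{i_2,\ldots,i_m=1}^n a_{ii_2\ldots i_m}x_{i_2}\cdots x_{i_m}$. $\mathbb{A}$ is a $P$ tensor if for every nonzero $x\in\mathbb{R}^n$, $\max_{i\in[n]}x_i(\mathbb{A}x^{m-1})_i>0$; it is a $P_0$ tensor if for every nonzero $x\in\mathbb{R}^n$ there is $i\in[n]$ with $x_i\ne0$ and $x_i(\mathbb{A}x^{m-1})_i\ge0$. $\mathbb{A}$ is a $B$ tensor if for all $i\in[n]$, $\sum_{i_2,\ldots,i_m=1}^n a_{ii_2\ldots i_m}>0$ and $\frac{1}{n^{m-1}}\sum_{i_2,\ldots,i_m=1}^n a_{ii_2\ldots i_m}>a_{ij_2\ldots j_m}$ for all $(j_2,\ldots,j_m)\neq(i,\ldots,i)$. $\mathbb{A}$ is a $B_0$ tensor if the same two conditions hold with $\ge$ in place of $>$. *)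

theory Defs
  imports "HOL-Analysis.Analysis"
begin

text \<open>A real m-th order n-dimensional tensor is represented as a function
  A :: nat list \<Rightarrow> real; its entry a_{i1...im} is A [i1,...,im], where indices
  are taken from {0..<n} (0-based) and index lists have length m.
  Values of A outside such lists are irrelevant. Vectors x in R^n are functions
  nat \<Rightarrow> real, only x 0, ..., x (n-1) being relevant.\<close>

definition idx_tuples :: "nat \<Rightarrow> nat \<Rightarrow> nat list set" where
  "idx_tuples k n = {js. length js = k \<and> set js \<subseteq> {..<n}}"

definition tensor_apply :: "nat \<Rightarrow> nat \<Rightarrow> (nat list \<Rightarrow> real) \<Rightarrow> (nat \<Rightarrow> real) \<Rightarrow> nat \<Rightarrow> real" where
  "tensor_apply m n A x i = (\<Sum>js\<in>idx_tuples (m - 1) n. A (i # js) * prod_list (map x js))"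

definition nonzero_vec :: "nat \<Rightarrow> (nat \<Rightarrow> real) \<Rightarrow> bool" where
  "nonzero_vec n x \<longleftrightarrow> (\<exists>i<n. x i \<noteq> 0)"

definition Z_tensor :: "nat \<Rightarrow> nat \<Rightarrow> (nat list \<Rightarrow> real) \<Rightarrow> bool" where
  "Z_tensor m n A \<longleftrightarrow> (\<forall>is\<in>idx_tuples m n. (\<forall>i. is \<noteq> replicate m i) \<longrightarrow> A is \<le> 0)"

definition P_tensor :: "nat \<Rightarrow> nat \<Rightarrow> (nat list \<Rightarrow> real) \<Rightarrow> bool" where
  "P_tensor m n A \<longleftrightarrow> (\<forall>x. nonzero_vec n x \<longrightarrow> (\<exists>i<n. x i * tensor_apply m n A x i > 0))"

definition P0_tensor :: "nat \<Rightarrow> nat \<Rightarrow> (nat list \<Rightarrow> real) \<Rightarrow> bool" where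
  "P0_tensor m n A \<longleftrightarrow> (\<forall>x. nonzero_vec n x \<longrightarrow>
      (\<exists>i<n. x i \<noteq> 0 \<and> x i * tensor_apply m n A x i \<ge> 0))"

definition row_sum :: "nat \<Rightarrow> nat \<Rightarrow> (nat list \<Rightarrow> real) \<Rightarrow> nat \<Rightarrow> real" where
  "row_sum m n A i = (\<Sum>js\<in>idx_tuples (m - 1) n. A (i # js))"

definition B_tensor :: "nat \<Rightarrow> nat \<Rightarrow> (nat list \<Rightarrow> real) \<Rightarrow> bool" where
  "B_tensor m n A \<longleftrightarrow> (\<forall>i<n. row_sum m n A i > 0 \<and>
      (\<forall>js\<in>idx_tuples (m - 1) n. js \<noteq> replicate (m - 1) i \<longrightarrow>
          row_sum m n A i / real n ^ (m - 1) > A (i # js)))"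

definition B0_tensor :: "nat \<Rightarrow> nat \<Rightarrow> (nat list \<Rightarrow> real) \<Rightarrow> bool" where
  "B0_tensor m n A \<longleftrightarrow> (\<forall>i<n. row_sum m n A i \<ge> 0 \<and>
      (\<forall>js\<in>idx_tuples (m - 1) n. js \<noteq> replicate (m - 1) i \<longrightarrow>
          row_sum m n A i / real n ^ (m - 1) \<ge> A (i # js)))"

end

theory Submission
  imports Defs
begin

text \<open>Pick an index i at which |x_i| is maximal. The diagonal entry of row i contributes
  a_{i...i} x_i^m = a_{i...i} |x_i|^m because m is even; every other entry a_{i js} is
  nonpositive and |x_i x_js| \<le> |x_i|^m, so its contribution is at least a_{i js} |x_i|^m.
  Hence x_i (A x^{m-1})_i \<ge> (row sum i) |x_i|^m, and only the row-sum condition of the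
  B (resp. B_0) property is needed.\<close>

lemma abs_prod_list_map_le_power:
  fixes x :: "'b \<Rightarrow> 'a::linordered_idom"
  assumes "\<And>j. j \<in> set js \<Longrightarrow> \<bar>x j\<bar> \<le> c"
  shows "\<bar>prod_list (map x js)\<bar> \<le> c ^ length js"
  using assms
proof (induction js)
  case Nil
  then show ?case by simp
next
  case (Cons a js)
  have "\<bar>x a\<bar> \<le> c" and "\<bar>prod_list (map x js)\<bar> \<le> c ^ length js"
    using Cons by auto
  then show ?case by (simp add: abs_mult mult_mono')
qed

lemma exists_abs_max_index:
  fixes x :: "nat \<Rightarrow> real"
  assumes "nonzero_vec n x"
  obtains i where "i < n" "x i \<noteq> 0" "\<And>j. j < n \<Longrightarrow> \<bar>x j\<bar> \<le> \<bar>x i\<bar>"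
proof -
  obtain j where j: "j < n" "x j \<noteq> 0"
    using assms by (auto simp: nonzero_vec_def)
  let ?M = "Max ((\<lambda>k. \<bar>x k\<bar>) ` {..<n})"
  obtain i where i: "i < n" "\<bar>x i\<bar> = ?M"
    using Max_in[of "(\<lambda>k. \<bar>x k\<bar>) ` {..<n}"] j(1) by fastforce
  have max: "\<bar>x k\<bar> \<le> \<bar>x i\<bar>" if "k < n" for k
    using i(2) that by simp
  have "x i \<noteq> 0"
    using max[OF j(1)] j(2) by auto
  with i max that show ?thesis by blast
qed

lemma Z_tensor_offdiag_nonpos:
  assumes "Z_tensor m n A" "m > 0" "i < n" "js \<in> idx_tuples (m - 1) n"
    and "js \<noteq> replicate (m - 1) i"
  shows "A (i # js) \<le> 0"
proof -
  have "i # js \<in> idx_tuples m n"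
    using assms(2-4) by (auto simp: idx_tuples_def)
  moreover have "i # js \<noteq> replicate m k" for k
    using assms(2,5) by (cases m) auto
  ultimately show ?thesis
    using assms(1) by (auto simp: Z_tensor_def)
qed

lemma Z_tensor_entry_term_ge:
  assumes "Z_tensor m n A" "m > 0" "even m" "i < n" "js \<in> idx_tuples (m - 1) n"
    and max: "\<And>j. j < n \<Longrightarrow> \<bar>x j\<bar> \<le> \<bar>x i\<bar>"
  shows "A (i # js) * \<bar>x i\<bar> ^ m \<le> A (i # js) * (x i * prod_list (map x js))"
proof (cases "js = replicate (m - 1) i")
  case True
  have "x i * prod_list (map x js) = x i ^ m"
    using True \<open>m > 0\<close> by (simp flip: power_Suc)
  also have "\<dots> = \<bar>x i\<bar> ^ m"
    using \<open>even m\<close> by (simp add: power_even_abs)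
  finally show ?thesis by simp
next
  case False
  have "length js = m - 1" "set js \<subseteq> {..<n}"
    using assms(5) by (auto simp: idx_tuples_def)
  then have "\<bar>prod_list (map x js)\<bar> \<le> \<bar>x i\<bar> ^ (m - 1)"
    using abs_prod_list_map_le_power[of js x "\<bar>x i\<bar>"] max by auto
  then have "\<bar>x i * prod_list (map x js)\<bar> \<le> \<bar>x i\<bar> * \<bar>x i\<bar> ^ (m - 1)"
    by (simp add: abs_mult mult_left_mono)
  also have "\<dots> = \<bar>x i\<bar> ^ m"
    using \<open>m > 0\<close> by (simp flip: power_Suc)
  finally have "x i * prod_list (map x js) \<le> \<bar>x i\<bar> ^ m"
    by simp
  moreover have "A (i # js) \<le> 0"
    using Z_tensor_offdiag_nonpos[OF assms(1,2,4,5) False] .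
  ultimately show ?thesis
    by (simp add: mult_left_mono_neg)
qed

lemma Z_tensor_apply_at_abs_max_ge:
  assumes "Z_tensor m n A" "m > 0" "even m" "i < n"
    and "\<And>j. j < n \<Longrightarrow> \<bar>x j\<bar> \<le> \<bar>x i\<bar>"
  shows "row_sum m n A i * \<bar>x i\<bar> ^ m \<le> x i * tensor_apply m n A x i"
proof -
  have "row_sum m n A i * \<bar>x i\<bar> ^ m = (\<Sum>js\<in>idx_tuples (m - 1) n. A (i # js) * \<bar>x i\<bar> ^ m)"
    by (simp add: row_sum_def sum_distrib_right)
  also have "\<dots> \<le> (\<Sum>js\<in>idx_tuples (m - 1) n. A (i # js) * (x i * prod_list (map x js)))"
    using assms by (intro sum_mono Z_tensor_entry_term_ge)
  also have "\<dots> = x i * tensor_apply m n A x i"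
    by (simp add: tensor_apply_def sum_distrib_left mult_ac)
  finally show ?thesis .
qed

theorem theorem3p6:
  fixes m n :: nat and A :: "nat list \<Rightarrow> real"
  assumes "m \<ge> 2" and "even m" and "Z_tensor m n A"
  shows "(B_tensor m n A \<longrightarrow> P_tensor m n A) \<and> (B0_tensor m n A \<longrightarrow> P0_tensor m n A)"
proof -
  have bound: "\<exists>i<n. x i \<noteq> 0 \<and> row_sum m n A i * \<bar>x i\<bar> ^ m \<le> x i * tensor_apply m n A x i
      \<and> \<bar>x i\<bar> ^ m > 0" if x: "nonzero_vec n x" for x
  proof -
    obtain i where "i < n" "x i \<noteq> 0" "\<And>j. j < n \<Longrightarrow> \<bar>x j\<bar> \<le> \<bar>x i\<bar>"
      using exists_abs_max_index[OF x] by blast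
    then show ?thesis
      using Z_tensor_apply_at_abs_max_ge[OF assms(3) _ assms(2)] assms(1) by force
  qed
  have "P_tensor m n A" if "B_tensor m n A"
    unfolding P_tensor_def
    by (smt (verit) that bound B_tensor_def mult_pos_pos)
  moreover have "P0_tensor m n A" if "B0_tensor m n A"
    unfolding P0_tensor_def
    by (smt (verit) that bound B0_tensor_def mult_nonneg_nonneg)
  ultimately show ?thesis by blast
qed

end
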